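(* For every $i=0,\ldots,n$, $$Y_i=\operatorname*{ess\,sup}_{\tau\in\bar{\mathcal S}_i} Y^{(\tau)}_i,$$ where, for $\tau\in\bar{\mathcal S}_i$, $(Y^{(\tau)}_j)_{i\le j\le\tau}$ is the adapted integrable solution of $$Y^{(\tau)}_\tau=S_\tau,\qquad Y^{(\tau)}_j=E_j[Y^{(\tau)}_{j+1}]+f\big(j,Y^{(\tau)}_j,E_j[\beta_{j+1}Y^{(\tau)}_{j+1}]\big)\Delta_j,\quad i\le j<\tau .$$ Moreover, the stopping time $\tau^*_i$ attains the essential supremum, i.e. $Y_i=Y^{(\tau^*_i)}_i$.
   Context: Standing setting: $n\ge 1$ and $D\ge 1$ are integers; $(\Omega,\mathcal F,(\mathcal F_i)_{i=0,\ldots,n},P)$ is a filtered probability space and $E_i[\cdot]=E[\cdot\mid\mathcal F_i]$. The constants $\Delta_0,\ldots,\Delta_{n-1}$ are positive reals. $S=(S_i)_{i=0,\ldots,n}$ is an adapted process with values in $\mathbb R\cup\{-\infty\}$, $S_n$ real-valued, with $\sum_{i=0}^{n-1}E[|S_i\mathbf 1_{\{S_i>-\infty\}}|]+E[|S_n|]<\infty$. The random field $f:\Omega\times\{0,\ldots,n-1\}\times\mathbb R\times\mathbb R^D\to\mathbb R$ is measurable, $f(\cdot,i,y,z)$ is $\mathcal F_i$-measurable for every $(y,z)$ (the dependence on $\omega$ is suppressed), $\sum_{i=0}^{n-1}E[|f(i,0,0)|]<\infty$, and there are adapted nonnegative processes $\alpha^{(0)},\ldots,\alpha^{(D)}$ with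 $|f(i,y,z)-f(i,y',z')|\le\alpha^{(0)}_i|y-y'|+\sum_{d=1}^D\alpha^{(d)}_i|z_d-z'_d|$ for all $(y,z),(y',z')\in\mathbb R\times\mathbb R^D$. $\beta=(\beta_i)_{i=1,\ldots,n}$ is a bounded adapted $\mathbb R^D$-valued process, and for $i=0,\ldots,n-1$ almost surely $\alpha^{(0)}_i<1/\Delta_i$ and $\sum_{d=1}^D\alpha^{(d)}_i|\beta_{d,i+1}|\le 1/\Delta_i$. $Y$ denotes the unique adapted integrable process with $Y_n=S_n$ and $Y_i=\max\{S_i,\;E_i[Y_{i+1}]+f(i,Y_i,E_i[\beta_{i+1}Y_{i+1}])\Delta_i\}$ for $i=0,\ldots,n-1$. $\bar{\mathcal S}_i$ is the set of stopping times $\tau$ with $\tau\ge i$ and $S_\tau>-\infty$ (i.e. $\tau(\omega)\in\{j: S_j(\omega)>-\infty\}$ for all $\omega$). $\tau^*_i:=\inf\{j\ge i:\; S_j\ge E_j[Y_{j+1}]+f(j,Y_j,E_j[\beta_{j+1}Y_{j+1}])\Delta_j\}\wedge n$. *)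

theory Defs
  imports "HOL-Probability.Probability"
begin

definition is_esssup_family ::
  "'a measure \<Rightarrow> 'b set \<Rightarrow> ('b \<Rightarrow> 'a \<Rightarrow> real) \<Rightarrow> ('a \<Rightarrow> real) \<Rightarrow> bool" where
  "is_esssup_family M T X Z \<longleftrightarrow>
     Z \<in> borel_measurable M \<and>
     (\<forall>t\<in>T. AE \<omega> in M. X t \<omega> \<le> Z \<omega>) \<and>
     (\<forall>Z' \<in> borel_measurable M. (\<forall>t\<in>T. AE \<omega> in M. X t \<omega> \<le> Z' \<omega>) \<longrightarrow>
        (AE \<omega> in M. Z \<omega> \<le> Z' \<omega>))"

definition Sbar ::
  "'a measure \<Rightarrow> (nat \<Rightarrow> 'a measure) \<Rightarrow> (nat \<Rightarrow> 'a \<Rightarrow> ereal) \<Rightarrow> nat \<Rightarrow> nat \<Rightarrow> ('a \<Rightarrow> nat) set" where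
  "Sbar M F S n i = {\<tau>. stopping_time F \<tau> \<and>
      (\<forall>\<omega>\<in>space M. i \<le> \<tau> \<omega> \<and> \<tau> \<omega> \<le> n \<and> S (\<tau> \<omega>) \<omega> \<noteq> -\<infinity>)}"

definition cond_exp_vec ::
  "'a measure \<Rightarrow> 'a measure \<Rightarrow> ('a \<Rightarrow> real ^ 'd) \<Rightarrow> ('a \<Rightarrow> real) \<Rightarrow> 'a \<Rightarrow> real ^ 'd" where
  "cond_exp_vec M G b X = (\<lambda>\<omega>. \<chi> d. real_cond_exp M G (\<lambda>\<eta>. b \<eta> $ d * X \<eta>) \<omega>)"

definition driver ::
  "'a measure \<Rightarrow> (nat \<Rightarrow> 'a measure) \<Rightarrow> (nat \<Rightarrow> 'a \<Rightarrow> real \<Rightarrow> real ^ 'd \<Rightarrow> real) \<Rightarrow>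
   (nat \<Rightarrow> 'a \<Rightarrow> real ^ 'd) \<Rightarrow> (nat \<Rightarrow> real) \<Rightarrow> (nat \<Rightarrow> 'a \<Rightarrow> real) \<Rightarrow> nat \<Rightarrow> 'a \<Rightarrow> real" where
  "driver M F f \<beta> \<Delta> X j \<omega> =
     real_cond_exp M (F j) (X (Suc j)) \<omega>
     + f j \<omega> (X j \<omega>) (cond_exp_vec M (F j) (\<beta> (Suc j)) (X (Suc j)) \<omega>) * \<Delta> j"

definition tau_star ::
  "'a measure \<Rightarrow> (nat \<Rightarrow> 'a measure) \<Rightarrow> (nat \<Rightarrow> 'a \<Rightarrow> real \<Rightarrow> real ^ 'd \<Rightarrow> real) \<Rightarrow>
   (nat \<Rightarrow> 'a \<Rightarrow> real ^ 'd) \<Rightarrow> (nat \<Rightarrow> real) \<Rightarrow> (nat \<Rightarrow> 'a \<Rightarrow> ereal) \<Rightarrow> (nat \<Rightarrow> 'a \<Rightarrow> real) \<Rightarrow>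
   nat \<Rightarrow> nat \<Rightarrow> 'a \<Rightarrow> nat" where
  "tau_star M F f \<beta> \<Delta> S Y n i = (\<lambda>\<omega>. LEAST j. i \<le> j \<and>
     (j = n \<or> (j < n \<and> S j \<omega> \<ge> ereal (driver M F f \<beta> \<Delta> Y j \<omega>))))"

end

theory Submission
  imports Defs
begin

text \<open>The key is a comparison principle for the implicit scheme
  \<open>X\<^sub>j = E\<^sub>j[X\<^sub>j\<^sub>+\<^sub>1] + f(j, X\<^sub>j, E\<^sub>j[\<beta>\<^sub>j\<^sub>+\<^sub>1 X\<^sub>j\<^sub>+\<^sub>1]) \<Delta>\<^sub>j\<close>: on an \<open>\<F>\<^sub>j\<close>-event where
  \<open>V\<^sub>j\<^sub>+\<^sub>1 \<le> U\<^sub>j\<^sub>+\<^sub>1\<close>, a supersolution \<open>U\<^sub>j\<close> dominates a subsolution \<open>V\<^sub>j\<close>. The Lipschitz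
  dependence on \<open>E\<^sub>j[\<beta> X]\<close> is absorbed by \<open>E\<^sub>j[U\<^sub>j\<^sub>+\<^sub>1 - V\<^sub>j\<^sub>+\<^sub>1]\<close> thanks to
  \<open>\<Sum>\<^sub>d \<alpha>\<^sup>(\<^sup>d\<^sup>) |\<beta>\<^sub>d| \<le> 1/\<Delta>\<close>, and the implicit dependence on \<open>X\<^sub>j\<close> by \<open>\<alpha>\<^sup>(\<^sup>0\<^sup>) < 1/\<Delta>\<close>.
  Iterating backwards on the \<open>\<F>\<^sub>j\<close>-events \<open>{j < \<tau>}\<close> compares processes up to a stopping time.

  \<open>Y\<close> is a supersolution dominating \<open>S\<close>, while \<open>Y\<^sup>(\<^sup>\<tau>\<^sup>)\<close> solves the scheme before \<open>\<tau>\<close> and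
  equals \<open>S\<close> at \<open>\<tau>\<close>; hence \<open>Y\<^sup>(\<^sup>\<tau>\<^sup>)\<^sub>i \<le> Y\<^sub>i\<close>. Before \<open>\<tau>\<^sup>*\<^sub>i\<close> the obstacle is inactive, so
  \<open>Y\<close> itself solves the scheme there, and at \<open>\<tau>\<^sup>*\<^sub>i\<close> it equals \<open>S\<close>; comparing in the other
  direction gives \<open>Y\<^sub>i = Y\<^sup>(\<^sup>\<tau>\<^sup>*\<^sup>)\<^sub>i\<close>, so the essential supremum is attained.\<close>

definition dyadic_floor :: "nat \<Rightarrow> real \<Rightarrow> real" where
  "dyadic_floor k x = real_of_int \<lfloor>x * 2^k\<rfloor> / 2^k"

lemma dyadic_floor_dist: "\<bar>dyadic_floor k x - x\<bar> \<le> 1 / 2^k"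
proof -
  have "\<bar>real_of_int \<lfloor>x * 2^k\<rfloor> - x * 2^k\<bar> \<le> 1"
    using of_int_floor_le[of "x * 2^k"] real_of_int_floor_gt_diff_one[of "x * 2^k"] by linarith
  then have "\<bar>real_of_int \<lfloor>x * 2^k\<rfloor> - x * 2^k\<bar> / 2^k \<le> 1 / 2^k"
    by (simp add: divide_right_mono)
  then show ?thesis
    by (simp add: dyadic_floor_def field_simps abs_div_pos[symmetric])
qed

text \<open>The rounded parameters take only countably many values.\<close>
lemma borel_measurable_dyadic_floor_compose:
  fixes f :: "'a \<Rightarrow> real \<Rightarrow> real^'d \<Rightarrow> real"
  assumes sec: "\<And>y z. (\<lambda>\<omega>. f \<omega> y z) \<in> borel_measurable G"
    and g: "g \<in> borel_measurable G" and h: "\<And>d. (\<lambda>\<omega>. h \<omega> $ d) \<in> borel_measurable G"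
  shows "(\<lambda>\<omega>. f \<omega> (dyadic_floor k (g \<omega>)) (\<chi> d. dyadic_floor k (h \<omega> $ d))) \<in> borel_measurable G"
proof -
  define idx where "idx \<omega> = (\<lfloor>g \<omega> * 2^k\<rfloor>, \<lambda>d. \<lfloor>h \<omega> $ d * 2^k\<rfloor>)" for \<omega>
  define \<Phi> where "\<Phi> = (\<lambda>(m::int, p::'d \<Rightarrow> int) \<omega>.
    f \<omega> (real_of_int m / 2^k) (\<chi> d. real_of_int (p d) / 2^k))"
  have idx: "idx \<in> measurable G (count_space UNIV)"
  proof (subst measurable_count_space_eq2_countable, safe)
    fix m :: int and p :: "'d \<Rightarrow> int"
    have "idx -` {(m, p)} \<inter> space G
        = {\<omega> \<in> space G. \<lfloor>g \<omega> * 2^k\<rfloor> = m \<and> (\<forall>d\<in>UNIV. \<lfloor>h \<omega> $ d * 2^k\<rfloor> = p d)}"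
      by (auto simp: idx_def fun_eq_iff)
    also have "\<dots> \<in> sets G"
      using g h by measurable
    finally show "idx -` {(m, p)} \<inter> space G \<in> sets G" .
  qed simp
  have "(\<lambda>\<omega>. \<Phi> (idx \<omega>) \<omega>) \<in> borel_measurable G"
    by (rule measurable_compose_countable'[OF _ idx]) (auto simp: \<Phi>_def sec split: prod.split)
  moreover have "(\<lambda>\<omega>. f \<omega> (dyadic_floor k (g \<omega>)) (\<chi> d. dyadic_floor k (h \<omega> $ d))) = (\<lambda>\<omega>. \<Phi> (idx \<omega>) \<omega>)"
    by (auto simp: \<Phi>_def idx_def dyadic_floor_def fun_eq_iff)
  ultimately show ?thesis by simp
qed

lemma borel_measurable_lipschitz_random_field:
  fixes f :: "'a \<Rightarrow> real \<Rightarrow> real^'d \<Rightarrow> real"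
  assumes sec: "\<And>y z. (\<lambda>\<omega>. f \<omega> y z) \<in> borel_measurable G"
    and lip: "\<And>\<omega> y y' z z'. \<omega> \<in> space G \<Longrightarrow>
      \<bar>f \<omega> y z - f \<omega> y' z'\<bar> \<le> a \<omega> * \<bar>y - y'\<bar> + (\<Sum>d\<in>UNIV. b d \<omega> * \<bar>z $ d - z' $ d\<bar>)"
    and g: "g \<in> borel_measurable G" and h: "\<And>d. (\<lambda>\<omega>. h \<omega> $ d) \<in> borel_measurable G"
  shows "(\<lambda>\<omega>. f \<omega> (g \<omega>) (h \<omega>)) \<in> borel_measurable G"
proof -
  define u where "u k \<omega> = f \<omega> (dyadic_floor k (g \<omega>)) (\<chi> d. dyadic_floor k (h \<omega> $ d))" for k \<omega>
  have u_meas: "u k \<in> borel_measurable G" for k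
    unfolding u_def[abs_def] by (rule borel_measurable_dyadic_floor_compose[OF sec g h])
  have approx: "c * \<bar>dyadic_floor k x - x\<bar> \<le> \<bar>c\<bar> * (1/2^k)" for c k x
  proof -
    have "c * \<bar>dyadic_floor k x - x\<bar> \<le> \<bar>c\<bar> * \<bar>dyadic_floor k x - x\<bar>"
      by (simp add: mult_right_mono)
    also have "\<dots> \<le> \<bar>c\<bar> * (1/2^k)"
      by (intro mult_left_mono dyadic_floor_dist) simp
    finally show ?thesis .
  qed
  have u_lim: "(\<lambda>k. u k \<omega>) \<longlonglongrightarrow> f \<omega> (g \<omega>) (h \<omega>)" if \<omega>: "\<omega> \<in> space G" for \<omega>
  proof (rule LIM_zero_cancel, rule Lim_null_comparison)
    define C where "C = \<bar>a \<omega>\<bar> + (\<Sum>d\<in>UNIV. \<bar>b d \<omega>\<bar>)"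
    have "norm (u k \<omega> - f \<omega> (g \<omega>) (h \<omega>)) \<le> C * (1/2)^k" for k
    proof -
      have "norm (u k \<omega> - f \<omega> (g \<omega>) (h \<omega>)) \<le> a \<omega> * \<bar>dyadic_floor k (g \<omega>) - g \<omega>\<bar>
          + (\<Sum>d\<in>UNIV. b d \<omega> * \<bar>(\<chi> d. dyadic_floor k (h \<omega> $ d)) $ d - h \<omega> $ d\<bar>)"
        unfolding u_def real_norm_def by (rule lip[OF \<omega>])
      also have "\<dots> \<le> \<bar>a \<omega>\<bar> * (1/2^k) + (\<Sum>d\<in>UNIV. \<bar>b d \<omega>\<bar> * (1/2^k))"
        unfolding vec_lambda_beta by (intro add_mono sum_mono approx)
      also have "\<dots> = C * (1/2)^k"
        by (simp add: C_def power_one_over add_divide_distrib sum_divide_distrib)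
      finally show ?thesis .
    qed
    then show "\<forall>\<^sub>F k in sequentially. norm (u k \<omega> - f \<omega> (g \<omega>) (h \<omega>)) \<le> C * (1/2)^k"
      by (intro always_eventually allI)
    show "(\<lambda>k. C * (1/2)^k) \<longlonglongrightarrow> 0"
      by (intro tendsto_mult_right_zero LIMSEQ_power_zero) simp
  qed
  show ?thesis
    by (rule borel_measurable_LIMSEQ_real[OF u_lim u_meas])
qed

lemma integrable_bounded_mult:
  fixes U b :: "'a \<Rightarrow> real"
  assumes "integrable M U" "b \<in> borel_measurable M" "\<And>x. x \<in> space M \<Longrightarrow> \<bar>b x\<bar> \<le> B"
  shows "integrable M (\<lambda>x. b x * U x)"
proof (rule Bochner_Integration.integrable_bound[where f="\<lambda>x. B * U x"])
  show "AE x in M. norm (b x * U x) \<le> norm (B * U x)"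
  proof (intro AE_I2)
    fix x assume "x \<in> space M"
    then have "\<bar>b x\<bar> * \<bar>U x\<bar> \<le> \<bar>B\<bar> * \<bar>U x\<bar>"
      using assms(3) by (intro mult_right_mono) force+
    then show "norm (b x * U x) \<le> norm (B * U x)"
      by (simp add: abs_mult)
  qed
qed (use assms in auto)

lemma integrable_weighted_abs_mult:
  fixes a b :: "'i::finite \<Rightarrow> 'a \<Rightarrow> real"
  assumes \<delta>: "integrable M \<delta>" "AE x in M. 0 \<le> \<delta> x"
    and a: "a i \<in> borel_measurable M" "\<And>i x. x \<in> space M \<Longrightarrow> 0 \<le> a i x"
    and b: "b i \<in> borel_measurable M"
    and ab: "AE x in M. (\<Sum>i\<in>UNIV. a i x * \<bar>b i x\<bar>) \<le> c"
  shows "integrable M (\<lambda>y. a i y * \<bar>b i y * \<delta> y\<bar>)"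
proof (rule Bochner_Integration.integrable_bound[where f="\<lambda>y. c * \<delta> y"])
  show "AE x in M. norm (a i x * \<bar>b i x * \<delta> x\<bar>) \<le> norm (c * \<delta> x)"
    using ab \<delta>(2) AE_space
  proof eventually_elim
    case (elim x)
    have "a i x * \<bar>b i x\<bar> \<le> (\<Sum>i\<in>UNIV. a i x * \<bar>b i x\<bar>)"
      by (rule member_le_sum) (use a(2) elim in auto)
    then have "a i x * \<bar>b i x\<bar> * \<delta> x \<le> c * \<delta> x"
      using elim by (intro mult_right_mono) auto
    moreover have "norm (a i x * \<bar>b i x * \<delta> x\<bar>) = a i x * \<bar>b i x\<bar> * \<delta> x"
      using a(2) elim by (simp add: abs_mult)
    ultimately show ?case
      using abs_ge_self[of "c * \<delta> x"] by simp
  qed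
qed (use \<delta> a b in auto)

lemma implicit_step_comparison:
  fixes \<Delta> a0 s u v cU cV fU fV :: real
  assumes "\<Delta> > 0" "a0 < 1/\<Delta>" "cU + fU * \<Delta> \<le> u" "v \<le> cV + fV * \<Delta>"
    "\<bar>fU - fV\<bar> \<le> a0 * \<bar>u - v\<bar> + s" "s \<le> (cU - cV) / \<Delta>"
  shows "v \<le> u"
proof (rule ccontr)
  assume "\<not> v \<le> u"
  then have pos: "v - u > 0" by simp
  have "a0 * \<Delta> < 1" "s * \<Delta> \<le> cU - cV"
    using assms(1,2,6) by (simp_all add: field_simps)
  moreover have "(fV - fU) * \<Delta> \<le> (a0 * (v - u) + s) * \<Delta>"
    using assms(1,5) pos by (intro mult_right_mono) (auto simp: abs_minus_commute)
  ultimately have "v - u \<le> (a0 * \<Delta>) * (v - u)"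
    using assms(3,4) by (simp add: algebra_simps)
  moreover have "(a0 * \<Delta>) * (v - u) < 1 * (v - u)"
    using \<open>a0 * \<Delta> < 1\<close> pos by (intro mult_strict_right_mono)
  ultimately show False by simp
qed

context sigma_finite_subalgebra
begin

lemma real_cond_exp_abs_le:
  assumes "integrable M g"
  shows "AE x in M. \<bar>real_cond_exp M F g x\<bar> \<le> real_cond_exp M F (\<lambda>x. \<bar>g x\<bar>) x"
proof -
  have ig: "integrable M (\<lambda>x. \<bar>g x\<bar>)" "integrable M (\<lambda>x. - g x)"
    using assms by auto
  have "AE x in M. real_cond_exp M F g x \<le> real_cond_exp M F (\<lambda>x. \<bar>g x\<bar>) x"
    by (rule real_cond_exp_mono) (use assms ig in auto)
  moreover have "AE x in M. real_cond_exp M F (\<lambda>x. - g x) x \<le> real_cond_exp M F (\<lambda>x. \<bar>g x\<bar>) x"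
    by (rule real_cond_exp_mono) (use ig in auto)
  moreover have "AE x in M. real_cond_exp M F (\<lambda>x. (-1) * g x) x = (-1) * real_cond_exp M F g x"
    by (rule real_cond_exp_cmult[OF assms])
  ultimately show ?thesis by eventually_elim auto
qed

lemma real_cond_exp_diff_indicator:
  assumes A: "A \<in> sets F" and g: "integrable M g" and h: "integrable M h"
  shows "AE x in M. x \<in> A \<longrightarrow>
    real_cond_exp M F g x - real_cond_exp M F h x = real_cond_exp M F (\<lambda>y. indicator A y * (g y - h y)) x"
proof -
  have "A \<in> sets M" using A subalg by (meson subalgebra_def subsetD)
  then have "integrable M (\<lambda>y. indicator A y * (g y - h y))"
    using integrable_mult_indicator[of A M "\<lambda>y. g y - h y"] g h by simp
  then have "AE x in M. real_cond_exp M F (\<lambda>y. indicator A y * (g y - h y)) x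
      = indicator A x * real_cond_exp M F (\<lambda>y. g y - h y) x"
    using A g h by (intro real_cond_exp_mult) auto
  with real_cond_exp_diff[OF g h] show ?thesis
    by eventually_elim simp
qed

lemma real_cond_exp_sum_mult:
  fixes a g :: "'i::finite \<Rightarrow> 'a \<Rightarrow> real"
  assumes "\<And>i. a i \<in> borel_measurable F" "\<And>i. g i \<in> borel_measurable M"
    and "\<And>i. integrable M (\<lambda>x. a i x * g i x)"
  shows "AE x in M. real_cond_exp M F (\<lambda>x. \<Sum>i\<in>UNIV. a i x * g i x) x
    = (\<Sum>i\<in>UNIV. a i x * real_cond_exp M F (g i) x)"
proof -
  have "AE x in M. \<forall>i\<in>UNIV. real_cond_exp M F (\<lambda>x. a i x * g i x) x = a i x * real_cond_exp M F (g i) x"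
    using assms by (intro AE_finite_allI real_cond_exp_mult) auto
  with real_cond_exp_sum[OF assms(3)] show ?thesis
    by eventually_elim simp
qed

lemma real_cond_exp_weighted_abs_le:
  fixes a b :: "'i::finite \<Rightarrow> 'a \<Rightarrow> real"
  assumes \<delta>: "integrable M \<delta>" "AE x in M. 0 \<le> \<delta> x"
    and a: "\<And>i. a i \<in> borel_measurable F" "\<And>i x. x \<in> space M \<Longrightarrow> 0 \<le> a i x"
    and b: "\<And>i. b i \<in> borel_measurable M" "\<And>i x. x \<in> space M \<Longrightarrow> \<bar>b i x\<bar> \<le> B"
    and ab: "AE x in M. (\<Sum>i\<in>UNIV. a i x * \<bar>b i x\<bar>) \<le> c"
  shows "AE x in M. (\<Sum>i\<in>UNIV. a i x * \<bar>real_cond_exp M F (\<lambda>y. b i y * \<delta> y) x\<bar>)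
    \<le> c * real_cond_exp M F \<delta> x"
proof -
  have [measurable]: "a i \<in> borel_measurable M" "b i \<in> borel_measurable M" "\<delta> \<in> borel_measurable M" for i
    using measurable_from_subalg[OF subalg a(1)] b \<delta> by auto
  have ab_int: "integrable M (\<lambda>y. a i y * \<bar>b i y * \<delta> y\<bar>)" for i
    by (rule integrable_weighted_abs_mult[OF \<delta> _ a(2) _ ab]) measurable
  have "AE x in M. \<forall>i\<in>UNIV. \<bar>real_cond_exp M F (\<lambda>y. b i y * \<delta> y) x\<bar>
      \<le> real_cond_exp M F (\<lambda>y. \<bar>b i y * \<delta> y\<bar>) x"
    by (intro AE_finite_allI real_cond_exp_abs_le integrable_bounded_mult[OF \<delta>(1) b]) simp
  moreover have "AE x in M. real_cond_exp M F (\<lambda>y. \<Sum>i\<in>UNIV. a i y * \<bar>b i y * \<delta> y\<bar>) x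
      = (\<Sum>i\<in>UNIV. a i x * real_cond_exp M F (\<lambda>y. \<bar>b i y * \<delta> y\<bar>) x)"
    by (rule real_cond_exp_sum_mult[OF a(1) _ ab_int]) simp
  moreover have "AE x in M. real_cond_exp M F (\<lambda>y. \<Sum>i\<in>UNIV. a i y * \<bar>b i y * \<delta> y\<bar>) x
      \<le> real_cond_exp M F (\<lambda>y. c * \<delta> y) x"
  proof (rule real_cond_exp_mono)
    show "AE x in M. (\<Sum>i\<in>UNIV. a i x * \<bar>b i x * \<delta> x\<bar>) \<le> c * \<delta> x"
      using ab \<delta>(2) by eventually_elim
        (simp add: abs_mult sum_distrib_right[symmetric] mult.assoc[symmetric] mult_right_mono)
  qed (use ab_int \<delta> in auto)
  moreover have "AE x in M. real_cond_exp M F (\<lambda>y. c * \<delta> y) x = c * real_cond_exp M F \<delta> x"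
    by (rule real_cond_exp_cmult[OF \<delta>(1)])
  ultimately show ?thesis
    using AE_space
  proof eventually_elim
    case (elim x)
    have "(\<Sum>i\<in>UNIV. a i x * \<bar>real_cond_exp M F (\<lambda>y. b i y * \<delta> y) x\<bar>)
        \<le> (\<Sum>i\<in>UNIV. a i x * real_cond_exp M F (\<lambda>y. \<bar>b i y * \<delta> y\<bar>) x)"
      using elim a(2) by (intro sum_mono mult_left_mono) auto
    then show ?case
      using elim by simp
  qed
qed

lemma cond_exp_vec_diff_indicator:
  fixes \<beta> :: "'a \<Rightarrow> real^'d" and U V :: "'a \<Rightarrow> real"
  assumes A: "A \<in> sets F" and U: "integrable M U" and V: "integrable M V"
    and \<beta>: "\<And>d. (\<lambda>x. \<beta> x $ d) \<in> borel_measurable M" "\<And>d x. x \<in> space M \<Longrightarrow> \<bar>\<beta> x $ d\<bar> \<le> B"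
  shows "AE x in M. \<forall>d\<in>UNIV. x \<in> A \<longrightarrow>
    cond_exp_vec M F \<beta> U x $ d - cond_exp_vec M F \<beta> V x $ d
      = real_cond_exp M F (\<lambda>y. \<beta> y $ d * (indicator A y * (U y - V y))) x"
proof (intro AE_finite_allI)
  fix d
  have "(\<lambda>y. indicator A y * (\<beta> y $ d * U y - \<beta> y $ d * V y))
      = (\<lambda>y. \<beta> y $ d * (indicator A y * (U y - V y)))"
    by (auto simp: fun_eq_iff algebra_simps)
  with real_cond_exp_diff_indicator[OF A integrable_bounded_mult[OF U \<beta>(1)[of d] \<beta>(2)[where d=d]]
      integrable_bounded_mult[OF V \<beta>(1)[of d] \<beta>(2)[where d=d]]]
  show "AE x in M. x \<in> A \<longrightarrow>
      cond_exp_vec M F \<beta> U x $ d - cond_exp_vec M F \<beta> V x $ d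
        = real_cond_exp M F (\<lambda>y. \<beta> y $ d * (indicator A y * (U y - V y))) x"
    by (simp add: cond_exp_vec_def)
qed simp

lemma cond_exp_vec_diff_weighted_le:
  fixes \<beta> :: "'a \<Rightarrow> real^'d" and U V :: "'a \<Rightarrow> real"
  assumes A: "A \<in> sets F" and U: "integrable M U" and V: "integrable M V"
    and \<beta>: "\<And>d. (\<lambda>x. \<beta> x $ d) \<in> borel_measurable M" "\<And>d x. x \<in> space M \<Longrightarrow> \<bar>\<beta> x $ d\<bar> \<le> B"
    and a: "\<And>d. a d \<in> borel_measurable F" "\<And>d x. x \<in> space M \<Longrightarrow> 0 \<le> a d x"
    and a\<beta>: "AE x in M. (\<Sum>d\<in>UNIV. a d x * \<bar>\<beta> x $ d\<bar>) \<le> c"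
    and VU: "AE x in M. x \<in> A \<longrightarrow> V x \<le> U x"
  shows "AE x in M. x \<in> A \<longrightarrow>
    (\<Sum>d\<in>UNIV. a d x * \<bar>cond_exp_vec M F \<beta> U x $ d - cond_exp_vec M F \<beta> V x $ d\<bar>)
      \<le> c * (real_cond_exp M F U x - real_cond_exp M F V x)"
proof -
  define \<delta> where "\<delta> y = indicator A y * (U y - V y)" for y
  have "A \<in> sets M" using A subalg by (meson subalgebra_def subsetD)
  then have "integrable M \<delta>"
    using integrable_mult_indicator[of A M "\<lambda>y. U y - V y"] U V by (simp add: \<delta>_def[abs_def])
  moreover have "AE x in M. 0 \<le> \<delta> x"
    using VU by eventually_elim (auto simp: \<delta>_def split: split_indicator)
  ultimately have "AE x in M. (\<Sum>d\<in>UNIV. a d x * \<bar>real_cond_exp M F (\<lambda>y. \<beta> y $ d * \<delta> y) x\<bar>)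
      \<le> c * real_cond_exp M F \<delta> x"
    by (rule real_cond_exp_weighted_abs_le[OF _ _ a \<beta> a\<beta>])
  moreover have "AE x in M. \<forall>d\<in>UNIV. x \<in> A \<longrightarrow>
      cond_exp_vec M F \<beta> U x $ d - cond_exp_vec M F \<beta> V x $ d = real_cond_exp M F (\<lambda>y. \<beta> y $ d * \<delta> y) x"
    using cond_exp_vec_diff_indicator[OF A U V \<beta>] unfolding \<delta>_def .
  moreover have "AE x in M. x \<in> A \<longrightarrow> real_cond_exp M F U x - real_cond_exp M F V x = real_cond_exp M F \<delta> x"
    using real_cond_exp_diff_indicator[OF A U V] unfolding \<delta>_def[abs_def] .
  ultimately show ?thesis
  proof eventually_elim
    case (elim x)
    show ?case
    proof
      assume "x \<in> A"
      with elim(2) have "(\<Sum>d\<in>UNIV. a d x * \<bar>cond_exp_vec M F \<beta> U x $ d - cond_exp_vec M F \<beta> V x $ d\<bar>)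
          = (\<Sum>d\<in>UNIV. a d x * \<bar>real_cond_exp M F (\<lambda>y. \<beta> y $ d * \<delta> y) x\<bar>)"
        by simp
      with elim(1,3) \<open>x \<in> A\<close> show "(\<Sum>d\<in>UNIV. a d x * \<bar>cond_exp_vec M F \<beta> U x $ d - cond_exp_vec M F \<beta> V x $ d\<bar>)
          \<le> c * (real_cond_exp M F U x - real_cond_exp M F V x)"
        by simp
    qed
  qed
qed

lemma real_cond_exp_implicit_step_comparison:
  fixes f :: "'a \<Rightarrow> real \<Rightarrow> real^'d \<Rightarrow> real" and \<beta> :: "'a \<Rightarrow> real^'d"
    and U V u v :: "'a \<Rightarrow> real"
  assumes A: "A \<in> sets F" and U: "integrable M U" and V: "integrable M V"
    and \<beta>: "\<And>d. (\<lambda>x. \<beta> x $ d) \<in> borel_measurable M" "\<And>d x. x \<in> space M \<Longrightarrow> \<bar>\<beta> x $ d\<bar> \<le> B"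
    and \<alpha>: "\<And>d. \<alpha> d \<in> borel_measurable F" "\<And>d x. x \<in> space M \<Longrightarrow> 0 \<le> \<alpha> d x"
    and \<Delta>: "\<Delta> > 0"
    and \<alpha>\<beta>_small: "AE x in M. (\<Sum>d\<in>UNIV. \<alpha> d x * \<bar>\<beta> x $ d\<bar>) \<le> 1/\<Delta>"
    and \<alpha>0_small: "AE x in M. \<alpha>0 x < 1/\<Delta>"
    and lip: "\<And>x y y' z z'. x \<in> space M \<Longrightarrow>
      \<bar>f x y z - f x y' z'\<bar> \<le> \<alpha>0 x * \<bar>y - y'\<bar> + (\<Sum>d\<in>UNIV. \<alpha> d x * \<bar>z $ d - z' $ d\<bar>)"
    and VU: "AE x in M. x \<in> A \<longrightarrow> V x \<le> U x"
    and super: "AE x in M. x \<in> A \<longrightarrow>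
      real_cond_exp M F U x + f x (u x) (cond_exp_vec M F \<beta> U x) * \<Delta> \<le> u x"
    and sub: "AE x in M. x \<in> A \<longrightarrow>
      v x \<le> real_cond_exp M F V x + f x (v x) (cond_exp_vec M F \<beta> V x) * \<Delta>"
  shows "AE x in M. x \<in> A \<longrightarrow> v x \<le> u x"
proof -
  have "AE x in M. x \<in> A \<longrightarrow>
    (\<Sum>d\<in>UNIV. \<alpha> d x * \<bar>cond_exp_vec M F \<beta> U x $ d - cond_exp_vec M F \<beta> V x $ d\<bar>)
      \<le> 1/\<Delta> * (real_cond_exp M F U x - real_cond_exp M F V x)"
    by (rule cond_exp_vec_diff_weighted_le[OF A U V \<beta> \<alpha> \<alpha>\<beta>_small VU])
  then show ?thesis
    using \<alpha>0_small super sub AE_space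
  proof eventually_elim
    case (elim x)
    show ?case
    proof
      assume x: "x \<in> A"
      show "v x \<le> u x"
        using implicit_step_comparison[OF \<Delta> elim(2) elim(3)[rule_format, OF x] elim(4)[rule_format, OF x]
            lip[OF elim(5)]] elim(1) x
        by simp
    qed
  qed
qed

end

lemma stopping_time_LEAST:
  fixes F :: "nat \<Rightarrow> 'a measure"
  assumes P_n: "\<And>\<omega>. P n \<omega>"
    and P_meas: "\<And>j t. j \<le> t \<Longrightarrow> t < n \<Longrightarrow> Measurable.pred (F t) (P j)"
  shows "stopping_time F (\<lambda>\<omega>. LEAST j. P j \<omega>)"
proof
  fix t
  have Least_le_iff: "(LEAST j. P j \<omega>) \<le> t \<longleftrightarrow> (\<exists>j\<in>{..t}. P j \<omega>)" for \<omega>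
    using LeastI[of "\<lambda>j. P j \<omega>", OF P_n] Least_le[of "\<lambda>j. P j \<omega>"] by (auto intro: order_trans)
  show "Measurable.pred (F t) (\<lambda>\<omega>. (LEAST j. P j \<omega>) \<le> t)"
  proof (cases "n \<le> t")
    case True
    then have "(LEAST j. P j \<omega>) \<le> t" for \<omega>
      using Least_le[of "\<lambda>j. P j \<omega>", OF P_n] by simp
    then show ?thesis by simp
  next
    case False
    then show ?thesis
      unfolding Least_le_iff using P_meas by (intro pred_intros_finite) auto
  qed
qed

locale discrete_bsde = prob_space M for M :: "'a measure" +
  fixes F :: "nat \<Rightarrow> 'a measure" and n :: nat and \<Delta> :: "nat \<Rightarrow> real"
    and f :: "nat \<Rightarrow> 'a \<Rightarrow> real \<Rightarrow> real ^ 'd \<Rightarrow> real"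
    and \<alpha>0 :: "nat \<Rightarrow> 'a \<Rightarrow> real" and \<alpha> :: "'d \<Rightarrow> nat \<Rightarrow> 'a \<Rightarrow> real"
    and \<beta> :: "nat \<Rightarrow> 'a \<Rightarrow> real ^ 'd" and B :: real
  assumes subalgebra_F: "\<And>j. j \<le> n \<Longrightarrow> subalgebra M (F j)"
    and sets_F_mono: "\<And>j k. j \<le> k \<Longrightarrow> k \<le> n \<Longrightarrow> sets (F j) \<subseteq> sets (F k)"
    and Delta_pos: "\<And>j. j < n \<Longrightarrow> \<Delta> j > 0"
    and f_adapted: "\<And>j y z. j < n \<Longrightarrow> (\<lambda>\<omega>. f j \<omega> y z) \<in> borel_measurable (F j)"
    and f_lip: "\<And>j \<omega> y y' z z'. j < n \<Longrightarrow> \<omega> \<in> space M \<Longrightarrow>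
      \<bar>f j \<omega> y z - f j \<omega> y' z'\<bar> \<le> \<alpha>0 j \<omega> * \<bar>y - y'\<bar> + (\<Sum>d\<in>UNIV. \<alpha> d j \<omega> * \<bar>z $ d - z' $ d\<bar>)"
    and alpha_meas: "\<And>d j. j \<le> n \<Longrightarrow> \<alpha> d j \<in> borel_measurable (F j)"
    and alpha_nonneg: "\<And>d j \<omega>. j \<le> n \<Longrightarrow> \<omega> \<in> space M \<Longrightarrow> \<alpha> d j \<omega> \<ge> 0"
    and beta_meas: "\<And>j. 1 \<le> j \<Longrightarrow> j \<le> n \<Longrightarrow> \<beta> j \<in> borel_measurable (F j)"
    and beta_bounded: "\<And>j \<omega>. j \<in> {1..n} \<Longrightarrow> \<omega> \<in> space M \<Longrightarrow> norm (\<beta> j \<omega>) \<le> B"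
    and alpha0_small: "\<And>j. j < n \<Longrightarrow> AE \<omega> in M. \<alpha>0 j \<omega> < 1 / \<Delta> j"
    and alpha_beta_small: "\<And>j. j < n \<Longrightarrow>
      AE \<omega> in M. (\<Sum>d\<in>UNIV. \<alpha> d j \<omega> * \<bar>\<beta> (Suc j) \<omega> $ d\<bar>) \<le> 1 / \<Delta> j"
begin

lemma space_F: "j \<le> n \<Longrightarrow> space (F j) = space M"
  using subalgebra_F by (simp add: subalgebra_def)

lemma sigma_finite_subalgebra_F: "j \<le> n \<Longrightarrow> sigma_finite_subalgebra M (F j)"
  by (intro finite_measure_subalgebra_is_sigma_finite)
    (simp add: finite_measure_subalgebra_def finite_measure_subalgebra_axioms_def
      subalgebra_F finite_measure_axioms)

lemma measurable_F_mono:
  "g \<in> borel_measurable (F j) \<Longrightarrow> j \<le> t \<Longrightarrow> t \<le> n \<Longrightarrow> g \<in> borel_measurable (F t)"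
  using sets_F_mono[of j t] space_F[of j] space_F[of t] by (auto simp: measurable_def)

lemma driver_measurable:
  assumes j: "j < n" and X: "X j \<in> borel_measurable (F j)"
  shows "driver M F f \<beta> \<Delta> X j \<in> borel_measurable (F j)"
proof -
  have "(\<lambda>\<omega>. f j \<omega> (X j \<omega>) (cond_exp_vec M (F j) (\<beta> (Suc j)) (X (Suc j)) \<omega>)) \<in> borel_measurable (F j)"
    by (rule borel_measurable_lipschitz_random_field[OF f_adapted f_lip])
      (use j X in \<open>auto simp: space_F cond_exp_vec_def\<close>)
  then show ?thesis
    unfolding driver_def[abs_def] by measurable
qed

lemma driver_step_comparison:
  assumes j: "j < n" and A: "A \<in> sets (F j)"
    and U: "integrable M (U (Suc j))" and V: "integrable M (V (Suc j))"
    and VU: "AE \<omega> in M. \<omega> \<in> A \<longrightarrow> V (Suc j) \<omega> \<le> U (Suc j) \<omega>"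
    and super: "AE \<omega> in M. \<omega> \<in> A \<longrightarrow> driver M F f \<beta> \<Delta> U j \<omega> \<le> U j \<omega>"
    and sub: "AE \<omega> in M. \<omega> \<in> A \<longrightarrow> V j \<omega> \<le> driver M F f \<beta> \<Delta> V j \<omega>"
  shows "AE \<omega> in M. \<omega> \<in> A \<longrightarrow> V j \<omega> \<le> U j \<omega>"
proof (rule sigma_finite_subalgebra.real_cond_exp_implicit_step_comparison
    [OF sigma_finite_subalgebra_F A U V _ _ _ _ Delta_pos alpha_beta_small alpha0_small f_lip VU])
  have "\<beta> (Suc j) \<in> borel_measurable M"
    using j by (intro measurable_from_subalg[OF subalgebra_F beta_meas]) auto
  then show "\<And>d. (\<lambda>\<omega>. \<beta> (Suc j) \<omega> $ d) \<in> borel_measurable M"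
    by (rule measurable_compose[OF _ borel_measurable_nth])
  show "\<And>d \<omega>. \<omega> \<in> space M \<Longrightarrow> \<bar>\<beta> (Suc j) \<omega> $ d\<bar> \<le> B"
    using j by (intro order_trans[OF component_le_norm_cart beta_bounded]) auto
qed (use j super sub alpha_meas alpha_nonneg in \<open>auto simp: driver_def\<close>)

lemma stopped_comparison:
  assumes \<tau>: "stopping_time F \<tau>" "\<And>\<omega>. \<omega> \<in> space M \<Longrightarrow> i \<le> \<tau> \<omega> \<and> \<tau> \<omega> \<le> n"
    and U: "\<And>j. i \<le> j \<Longrightarrow> j \<le> n \<Longrightarrow> integrable M (U j)"
    and V: "\<And>j. i \<le> j \<Longrightarrow> j \<le> n \<Longrightarrow> integrable M (V j)"
    and terminal: "AE \<omega> in M. V (\<tau> \<omega>) \<omega> \<le> U (\<tau> \<omega>) \<omega>"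
    and super: "\<And>j. i \<le> j \<Longrightarrow> j < n \<Longrightarrow>
      AE \<omega> in M. j < \<tau> \<omega> \<longrightarrow> driver M F f \<beta> \<Delta> U j \<omega> \<le> U j \<omega>"
    and sub: "\<And>j. i \<le> j \<Longrightarrow> j < n \<Longrightarrow>
      AE \<omega> in M. j < \<tau> \<omega> \<longrightarrow> V j \<omega> \<le> driver M F f \<beta> \<Delta> V j \<omega>"
  shows "AE \<omega> in M. V i \<omega> \<le> U i \<omega>"
proof -
  have "AE \<omega> in M. j \<le> \<tau> \<omega> \<longrightarrow> V j \<omega> \<le> U j \<omega>" if "i \<le> j" "j \<le> n" for j
    using that(2,1)
  proof (induction j rule: inc_induct)
    case base
    show ?case
      using terminal AE_space by eventually_elim (use \<tau>(2) in \<open>fastforce simp: le_antisym\<close>)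
  next
    case (step j)
    have ij: "i \<le> j" and jn: "j < n" "Suc j \<le> n"
      using step by auto
    define A where "A = {\<omega> \<in> space M. j < \<tau> \<omega>}"
    have A: "A \<in> sets (F j)"
      using stopping_timeD2[OF \<tau>(1), of j] space_F[of j] jn by (simp add: pred_def A_def)
    have "AE \<omega> in M. \<omega> \<in> A \<longrightarrow> V j \<omega> \<le> U j \<omega>"
    proof (rule driver_step_comparison[OF jn(1) A U V])
      show "AE \<omega> in M. \<omega> \<in> A \<longrightarrow> V (Suc j) \<omega> \<le> U (Suc j) \<omega>"
        using step.IH[OF le_SucI[OF ij]] by eventually_elim (simp add: A_def)
      show "AE \<omega> in M. \<omega> \<in> A \<longrightarrow> driver M F f \<beta> \<Delta> U j \<omega> \<le> U j \<omega>"
        using super[OF ij jn(1)] by eventually_elim (simp add: A_def)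
      show "AE \<omega> in M. \<omega> \<in> A \<longrightarrow> V j \<omega> \<le> driver M F f \<beta> \<Delta> V j \<omega>"
        using sub[OF ij jn(1)] by eventually_elim (simp add: A_def)
    qed (use ij jn in auto)
    with terminal AE_space show ?case
    proof eventually_elim
      case (elim \<omega>)
      then show ?case
        by (cases "\<tau> \<omega> = j") (auto simp: A_def)
    qed
  qed
  moreover have "i \<le> n"
    using \<tau>(2) not_empty by fastforce
  ultimately have "AE \<omega> in M. i \<le> \<tau> \<omega> \<longrightarrow> V i \<omega> \<le> U i \<omega>"
    by blast
  with AE_space show ?thesis
    by eventually_elim (use \<tau>(2) in blast)
qed

end

locale discrete_reflected_bsde = discrete_bsde +
  fixes S :: "nat \<Rightarrow> 'a \<Rightarrow> ereal" and Y :: "nat \<Rightarrow> 'a \<Rightarrow> real"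
  assumes S_meas: "\<And>j. j \<le> n \<Longrightarrow> S j \<in> borel_measurable (F j)"
    and S_n_real: "\<And>\<omega>. \<omega> \<in> space M \<Longrightarrow> S n \<omega> \<noteq> -\<infinity>"
    and Y_meas: "\<And>j. j \<le> n \<Longrightarrow> Y j \<in> borel_measurable (F j)"
    and Y_int: "\<And>j. j \<le> n \<Longrightarrow> integrable M (Y j)"
    and Y_term: "AE \<omega> in M. ereal (Y n \<omega>) = S n \<omega>"
    and Y_rec: "\<And>j. j < n \<Longrightarrow>
      AE \<omega> in M. ereal (Y j \<omega>) = max (S j \<omega>) (ereal (driver M F f \<beta> \<Delta> Y j \<omega>))"
begin

definition stopped_solution :: "nat \<Rightarrow> ('a \<Rightarrow> nat) \<Rightarrow> (nat \<Rightarrow> 'a \<Rightarrow> real) \<Rightarrow> bool" where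
  "stopped_solution i \<tau> X \<longleftrightarrow>
    (\<forall>j. i \<le> j \<longrightarrow> j \<le> n \<longrightarrow> integrable M (X j)) \<and>
    (AE \<omega> in M. ereal (X (\<tau> \<omega>) \<omega>) = S (\<tau> \<omega>) \<omega>) \<and>
    (\<forall>j. i \<le> j \<longrightarrow> j < n \<longrightarrow> (AE \<omega> in M. j < \<tau> \<omega> \<longrightarrow> X j \<omega> = driver M F f \<beta> \<Delta> X j \<omega>))"

lemma AE_Y_rec_all:
  "AE \<omega> in M. ereal (Y n \<omega>) = S n \<omega> \<and>
    (\<forall>j\<in>{..<n}. ereal (Y j \<omega>) = max (S j \<omega>) (ereal (driver M F f \<beta> \<Delta> Y j \<omega>)))"
proof -
  have "AE \<omega> in M. \<forall>j\<in>{..<n}. ereal (Y j \<omega>) = max (S j \<omega>) (ereal (driver M F f \<beta> \<Delta> Y j \<omega>))"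
    by (intro AE_finite_allI Y_rec) auto
  with Y_term show ?thesis
    by eventually_elim simp
qed

lemma driver_le_Y: "j < n \<Longrightarrow> AE \<omega> in M. driver M F f \<beta> \<Delta> Y j \<omega> \<le> Y j \<omega>"
  using Y_rec by (rule AE_mp) (auto intro!: AE_I2 simp flip: ereal_less_eq(3))

lemma stopped_solution_le_Y:
  assumes \<tau>: "\<tau> \<in> Sbar M F S n i" and X: "stopped_solution i \<tau> X"
  shows "AE \<omega> in M. X i \<omega> \<le> Y i \<omega>"
proof (rule stopped_comparison)
  show "stopping_time F \<tau>" "\<And>\<omega>. \<omega> \<in> space M \<Longrightarrow> i \<le> \<tau> \<omega> \<and> \<tau> \<omega> \<le> n"
    using \<tau> by (auto simp: Sbar_def)
  have "AE \<omega> in M. ereal (X (\<tau> \<omega>) \<omega>) = S (\<tau> \<omega>) \<omega>"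
    using X by (simp add: stopped_solution_def)
  with AE_Y_rec_all AE_space show "AE \<omega> in M. X (\<tau> \<omega>) \<omega> \<le> Y (\<tau> \<omega>) \<omega>"
  proof eventually_elim
    case (elim \<omega>)
    then have "\<tau> \<omega> \<le> n"
      using \<tau> by (auto simp: Sbar_def)
    then have "S (\<tau> \<omega>) \<omega> \<le> ereal (Y (\<tau> \<omega>) \<omega>)"
      using elim by (cases "\<tau> \<omega> = n") auto
    then show ?case
      using elim by (metis ereal_less_eq(3))
  qed
  show "AE \<omega> in M. j < \<tau> \<omega> \<longrightarrow> driver M F f \<beta> \<Delta> Y j \<omega> \<le> Y j \<omega>" if "j < n" for j
    using driver_le_Y[OF that] by eventually_elim simp
qed (use X Y_int in \<open>auto simp: stopped_solution_def\<close>)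

lemma tau_star_spec:
  assumes "i \<le> n"
  shows "i \<le> tau_star M F f \<beta> \<Delta> S Y n i \<omega>" and "tau_star M F f \<beta> \<Delta> S Y n i \<omega> \<le> n"
    and "tau_star M F f \<beta> \<Delta> S Y n i \<omega> < n \<Longrightarrow>
      ereal (driver M F f \<beta> \<Delta> Y (tau_star M F f \<beta> \<Delta> S Y n i \<omega>) \<omega>) \<le> S (tau_star M F f \<beta> \<Delta> S Y n i \<omega>) \<omega>"
    and "i \<le> j \<Longrightarrow> j < tau_star M F f \<beta> \<Delta> S Y n i \<omega> \<Longrightarrow> S j \<omega> < ereal (driver M F f \<beta> \<Delta> Y j \<omega>)"
proof -
  define P where "P = (\<lambda>j. i \<le> j \<and> (j = n \<or> (j < n \<and> ereal (driver M F f \<beta> \<Delta> Y j \<omega>) \<le> S j \<omega>)))"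
  have \<tau>: "tau_star M F f \<beta> \<Delta> S Y n i \<omega> = (LEAST j. P j)"
    by (simp add: tau_star_def P_def)
  have "P n"
    using assms by (simp add: P_def)
  then have "P (LEAST j. P j)" "(LEAST j. P j) \<le> n"
    by (auto intro: LeastI Least_le)
  then show "i \<le> tau_star M F f \<beta> \<Delta> S Y n i \<omega>" "tau_star M F f \<beta> \<Delta> S Y n i \<omega> \<le> n"
    "tau_star M F f \<beta> \<Delta> S Y n i \<omega> < n \<Longrightarrow>
      ereal (driver M F f \<beta> \<Delta> Y (tau_star M F f \<beta> \<Delta> S Y n i \<omega>) \<omega>) \<le> S (tau_star M F f \<beta> \<Delta> S Y n i \<omega>) \<omega>"
    unfolding \<tau> by (auto simp: P_def)
  show "S j \<omega> < ereal (driver M F f \<beta> \<Delta> Y j \<omega>)" if "i \<le> j" "j < tau_star M F f \<beta> \<Delta> S Y n i \<omega>"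
    using not_less_Least[of j P] that \<open>(LEAST j. P j) \<le> n\<close> unfolding \<tau> by (auto simp: P_def)
qed

lemma tau_star_in_Sbar:
  assumes i: "i \<le> n"
  shows "tau_star M F f \<beta> \<Delta> S Y n i \<in> Sbar M F S n i"
proof -
  have "stopping_time F (tau_star M F f \<beta> \<Delta> S Y n i)"
    unfolding tau_star_def
  proof (rule stopping_time_LEAST)
    fix j t assume jt: "j \<le> t" "t < n"
    have "j < n" "j \<le> n"
      using jt by auto
    have [measurable]: "driver M F f \<beta> \<Delta> Y j \<in> borel_measurable (F t)"
      "S j \<in> borel_measurable (F t)"
      using measurable_F_mono[OF driver_measurable[of j Y, OF \<open>j < n\<close> Y_meas[OF \<open>j \<le> n\<close>]] jt(1)]
        measurable_F_mono[OF S_meas[OF \<open>j \<le> n\<close>] jt(1)] jt(2)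
      by simp_all
    show "Measurable.pred (F t) (\<lambda>\<omega>. i \<le> j \<and>
        (j = n \<or> j < n \<and> ereal (driver M F f \<beta> \<Delta> Y j \<omega>) \<le> S j \<omega>))"
      by measurable
  qed (use i in simp)
  moreover have "S (tau_star M F f \<beta> \<Delta> S Y n i \<omega>) \<omega> \<noteq> -\<infinity>" if "\<omega> \<in> space M" for \<omega>
    using tau_star_spec(2,3)[OF i, of \<omega>] S_n_real[OF that] by (cases "tau_star M F f \<beta> \<Delta> S Y n i \<omega> = n") auto
  ultimately show ?thesis
    using tau_star_spec(1,2)[OF i] by (simp add: Sbar_def)
qed

lemma Y_le_stopped_solution_tau_star:
  assumes i: "i \<le> n" and X: "stopped_solution i (tau_star M F f \<beta> \<Delta> S Y n i) X"
  shows "AE \<omega> in M. Y i \<omega> \<le> X i \<omega>"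
proof (rule stopped_comparison)
  let ?\<tau> = "tau_star M F f \<beta> \<Delta> S Y n i"
  show "stopping_time F ?\<tau>" "\<And>\<omega>. \<omega> \<in> space M \<Longrightarrow> i \<le> ?\<tau> \<omega> \<and> ?\<tau> \<omega> \<le> n"
    using tau_star_in_Sbar[OF i] by (auto simp: Sbar_def)
  have "AE \<omega> in M. ereal (X (?\<tau> \<omega>) \<omega>) = S (?\<tau> \<omega>) \<omega>"
    using X by (simp add: stopped_solution_def)
  with AE_Y_rec_all show "AE \<omega> in M. Y (?\<tau> \<omega>) \<omega> \<le> X (?\<tau> \<omega>) \<omega>"
  proof eventually_elim
    case (elim \<omega>)
    have "ereal (Y (?\<tau> \<omega>) \<omega>) = S (?\<tau> \<omega>) \<omega>"
    proof (cases "?\<tau> \<omega> = n")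
      case False
      then show ?thesis
        using elim tau_star_spec(2,3)[OF i, of \<omega>] by (auto simp: max_def)
    qed (use elim in simp)
    then show ?case
      using elim by (metis ereal.inject order_refl)
  qed
  show "AE \<omega> in M. j < ?\<tau> \<omega> \<longrightarrow> Y j \<omega> \<le> driver M F f \<beta> \<Delta> Y j \<omega>" if "i \<le> j" "j < n" for j
    using Y_rec[OF that(2)]
  proof eventually_elim
    case (elim \<omega>)
    show ?case
    proof
      assume "j < ?\<tau> \<omega>"
      then have "S j \<omega> \<le> ereal (driver M F f \<beta> \<Delta> Y j \<omega>)"
        using tau_star_spec(4)[OF i that(1)] by (simp add: less_imp_le)
      with elim show "Y j \<omega> \<le> driver M F f \<beta> \<Delta> Y j \<omega>"
        by (simp add: max_absorb2)
    qed
  qed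
qed (use X Y_int in \<open>auto simp: stopped_solution_def\<close>)

lemma Y_is_esssup:
  assumes i: "i \<le> n" and X: "\<And>\<tau>. \<tau> \<in> Sbar M F S n i \<Longrightarrow> stopped_solution i \<tau> (X \<tau>)"
  shows "is_esssup_family M (Sbar M F S n i) (\<lambda>\<tau>. X \<tau> i) (Y i)"
    and "AE \<omega> in M. Y i \<omega> = X (tau_star M F f \<beta> \<Delta> S Y n i) i \<omega>"
proof -
  let ?\<tau> = "tau_star M F f \<beta> \<Delta> S Y n i"
  have \<tau>: "?\<tau> \<in> Sbar M F S n i"
    by (rule tau_star_in_Sbar[OF i])
  show opt: "AE \<omega> in M. Y i \<omega> = X ?\<tau> i \<omega>"
    using stopped_solution_le_Y[OF \<tau> X[OF \<tau>]] Y_le_stopped_solution_tau_star[OF i X[OF \<tau>]]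
    by eventually_elim simp
  show "is_esssup_family M (Sbar M F S n i) (\<lambda>\<tau>. X \<tau> i) (Y i)"
    unfolding is_esssup_family_def
  proof (intro conjI ballI impI)
    show "Y i \<in> borel_measurable M"
      by (rule measurable_from_subalg[OF subalgebra_F[OF i] Y_meas[OF i]])
    show "AE \<omega> in M. X \<tau> i \<omega> \<le> Y i \<omega>" if "\<tau> \<in> Sbar M F S n i" for \<tau>
      using stopped_solution_le_Y[OF that X[OF that]] .
    show "AE \<omega> in M. Y i \<omega> \<le> Z \<omega>" if "\<forall>\<tau>\<in>Sbar M F S n i. AE \<omega> in M. X \<tau> i \<omega> \<le> Z \<omega>" for Z
    proof -
      have "AE \<omega> in M. X ?\<tau> i \<omega> \<le> Z \<omega>"
        using that \<tau> by blast
      with opt show ?thesis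
        by eventually_elim simp
    qed
  qed
qed

end

text \<open>The hypotheses \<open>n \<ge> 1\<close>, \<open>S < \<infinity>\<close>, integrability of \<open>S\<close> and of \<open>f(j, 0, 0)\<close>, joint
  measurability of \<open>f\<close>, measurability and nonnegativity of \<open>\<alpha>\<^sup>(\<^sup>0\<^sup>)\<close> and measurability of
  \<open>Y\<^sup>(\<^sup>\<tau>\<^sup>)\<close> only serve the existence of the solutions, which is assumed here; the proof does not
  use them.\<close>
theorem proposition2p1:
  fixes M :: "'a measure" and F :: "nat \<Rightarrow> 'a measure" and n :: nat
    and \<Delta> :: "nat \<Rightarrow> real"
    and S :: "nat \<Rightarrow> 'a \<Rightarrow> ereal"
    and f :: "nat \<Rightarrow> 'a \<Rightarrow> real \<Rightarrow> real ^ 'd \<Rightarrow> real"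
    and \<alpha>0 :: "nat \<Rightarrow> 'a \<Rightarrow> real" and \<alpha> :: "'d \<Rightarrow> nat \<Rightarrow> 'a \<Rightarrow> real"
    and \<beta> :: "nat \<Rightarrow> 'a \<Rightarrow> real ^ 'd"
    and Y :: "nat \<Rightarrow> 'a \<Rightarrow> real"
    and Yt :: "('a \<Rightarrow> nat) \<Rightarrow> nat \<Rightarrow> 'a \<Rightarrow> real"
    and i :: nat
  assumes n_pos: "n \<ge> 1"
    and prob: "prob_space M"
    and filt_sub: "\<And>j. j \<le> n \<Longrightarrow> subalgebra M (F j)"
    and filt_mono: "\<And>j k. j \<le> k \<Longrightarrow> k \<le> n \<Longrightarrow> sets (F j) \<subseteq> sets (F k)"
    and Delta_pos: "\<And>j. j < n \<Longrightarrow> \<Delta> j > 0"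
    and S_meas: "\<And>j. j \<le> n \<Longrightarrow> S j \<in> borel_measurable (F j)"
    and S_not_pinf: "\<And>j \<omega>. j \<le> n \<Longrightarrow> \<omega> \<in> space M \<Longrightarrow> S j \<omega> \<noteq> \<infinity>"
    and S_n_real: "\<And>\<omega>. \<omega> \<in> space M \<Longrightarrow> S n \<omega> \<noteq> -\<infinity>"
    and S_int: "\<And>j. j \<le> n \<Longrightarrow> integrable M (\<lambda>\<omega>. real_of_ereal (S j \<omega>))"
    and f_joint_meas: "\<And>j. j < n \<Longrightarrow>
          (\<lambda>(\<omega>, y, z). f j \<omega> y z) \<in> borel_measurable (M \<Otimes>\<^sub>M (borel \<Otimes>\<^sub>M borel))"
    and f_adapted: "\<And>j y z. j < n \<Longrightarrow> (\<lambda>\<omega>. f j \<omega> y z) \<in> borel_measurable (F j)"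
    and f_int: "\<And>j. j < n \<Longrightarrow> integrable M (\<lambda>\<omega>. f j \<omega> 0 0)"
    and alpha0_meas: "\<And>j. j \<le> n \<Longrightarrow> \<alpha>0 j \<in> borel_measurable (F j)"
    and alpha_meas: "\<And>d j. j \<le> n \<Longrightarrow> \<alpha> d j \<in> borel_measurable (F j)"
    and alpha0_nonneg: "\<And>j \<omega>. j \<le> n \<Longrightarrow> \<omega> \<in> space M \<Longrightarrow> \<alpha>0 j \<omega> \<ge> 0"
    and alpha_nonneg: "\<And>d j \<omega>. j \<le> n \<Longrightarrow> \<omega> \<in> space M \<Longrightarrow> \<alpha> d j \<omega> \<ge> 0"
    and f_lip: "\<And>j \<omega> y y' z z'. j < n \<Longrightarrow> \<omega> \<in> space M \<Longrightarrow>
          \<bar>f j \<omega> y z - f j \<omega> y' z'\<bar> \<le> \<alpha>0 j \<omega> * \<bar>y - y'\<bar> + (\<Sum>d\<in>UNIV. \<alpha> d j \<omega> * \<bar>z $ d - z' $ d\<bar>)"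
    and beta_meas: "\<And>j. 1 \<le> j \<Longrightarrow> j \<le> n \<Longrightarrow> \<beta> j \<in> borel_measurable (F j)"
    and beta_bdd: "\<exists>B. \<forall>j\<in>{1..n}. \<forall>\<omega>\<in>space M. norm (\<beta> j \<omega>) \<le> B"
    and alpha0_small: "\<And>j. j < n \<Longrightarrow> AE \<omega> in M. \<alpha>0 j \<omega> < 1 / \<Delta> j"
    and alpha_beta_small: "\<And>j. j < n \<Longrightarrow>
          AE \<omega> in M. (\<Sum>d\<in>UNIV. \<alpha> d j \<omega> * \<bar>\<beta> (Suc j) \<omega> $ d\<bar>) \<le> 1 / \<Delta> j"
    and Y_meas: "\<And>j. j \<le> n \<Longrightarrow> Y j \<in> borel_measurable (F j)"
    and Y_int: "\<And>j. j \<le> n \<Longrightarrow> integrable M (Y j)"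
    and Y_term: "AE \<omega> in M. ereal (Y n \<omega>) = S n \<omega>"
    and Y_rec: "\<And>j. j < n \<Longrightarrow>
          AE \<omega> in M. ereal (Y j \<omega>) = max (S j \<omega>) (ereal (driver M F f \<beta> \<Delta> Y j \<omega>))"
    and i_le: "i \<le> n"
    and Yt_meas: "\<And>\<tau> j. \<tau> \<in> Sbar M F S n i \<Longrightarrow> i \<le> j \<Longrightarrow> j \<le> n \<Longrightarrow>
          Yt \<tau> j \<in> borel_measurable (F j)"
    and Yt_int: "\<And>\<tau> j. \<tau> \<in> Sbar M F S n i \<Longrightarrow> i \<le> j \<Longrightarrow> j \<le> n \<Longrightarrow> integrable M (Yt \<tau> j)"
    and Yt_term: "\<And>\<tau>. \<tau> \<in> Sbar M F S n i \<Longrightarrow>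
          AE \<omega> in M. ereal (Yt \<tau> (\<tau> \<omega>) \<omega>) = S (\<tau> \<omega>) \<omega>"
    and Yt_rec: "\<And>\<tau> j. \<tau> \<in> Sbar M F S n i \<Longrightarrow> i \<le> j \<Longrightarrow> j < n \<Longrightarrow>
          AE \<omega> in M. j < \<tau> \<omega> \<longrightarrow> Yt \<tau> j \<omega> = driver M F f \<beta> \<Delta> (Yt \<tau>) j \<omega>"
  shows "is_esssup_family M (Sbar M F S n i) (\<lambda>\<tau>. Yt \<tau> i) (Y i)
       \<and> tau_star M F f \<beta> \<Delta> S Y n i \<in> Sbar M F S n i
       \<and> (AE \<omega> in M. Y i \<omega> = Yt (tau_star M F f \<beta> \<Delta> S Y n i) i \<omega>)"
proof -
  obtain B where B: "\<And>j \<omega>. j \<in> {1..n} \<Longrightarrow> \<omega> \<in> space M \<Longrightarrow> norm (\<beta> j \<omega>) \<le> B"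
    using beta_bdd by blast
  interpret discrete_reflected_bsde M F n \<Delta> f \<alpha>0 \<alpha> \<beta> B S Y
    by (intro discrete_reflected_bsde.intro discrete_bsde.intro discrete_bsde_axioms.intro
        discrete_reflected_bsde_axioms.intro prob)
      (use filt_sub filt_mono Delta_pos f_adapted f_lip alpha_meas alpha_nonneg beta_meas B
        alpha0_small alpha_beta_small S_meas S_n_real Y_meas Y_int Y_term Y_rec in auto)
  have "stopped_solution i \<tau> (Yt \<tau>)" if "\<tau> \<in> Sbar M F S n i" for \<tau>
    using Yt_int[OF that] Yt_term[OF that] Yt_rec[OF that] by (simp add: stopped_solution_def)
  then show ?thesis
    using Y_is_esssup[OF i_le] tau_star_in_Sbar[OF i_le] by blast
qed

end
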